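(* For any $w, w' \in \mathcal{C}\langle A \rangle$ and $\bullet \in \{\ast, \mathrm{sh}\}$, \[ \iota(w \bullet_{\hbar} w')=\iota(w) \bullet \iota(w'), \] where $\bullet_\hbar$ denotes $\ast_\hbar$ if $\bullet=\ast$ and $\mathrm{sh}_\hbar$ if $\bullet=\mathrm{sh}$.
   Context: Let $\mathcal{C}=\mathbb{Q}[\hbar]$ ($\hbar$ formal), $\mathfrak{H}=\mathcal{C}\langle a,b\rangle$ the non-commutative polynomial ring. For $k\ge1$, $g_k=ba^k$. $A=\{\hbar b\}\cup\{ba^k\mid k\ge1\}$ (an algebraically independent set), $\mathcal{C}\langle A\rangle$ the $\mathcal{C}$-subalgebra generated by $1$ and $A$, $\mathfrak z$ the $\mathcal C$-span of $A$. Harmonic product: $\circ_\hbar$ symmetric $\mathcal C$-bilinear on $\mathfrak z$ with $(\hbar b)\circ_\hbar(\hbar b)=\hbar\cdot\hbar b$, $(\hbar b)\circ_\hbar g_k=\hbar g_k$, $g_k\circ_\hbar g_l=g_{k+l}$; $\ast_\hbar$ on $\mathcal{C}\langle A\rangle$: $w\ast_\hbar1=1\ast_\hbar w=w$, $(wu)\ast_\hbar(w'v)=(w\ast_\hbar w'v)u+(wu\ast_\hbar w')v+(w\ast_\hbar w')(u\circ_\hbar v)$ ($u,v\in A$). Shuffle product $\mathrm{sh}_\hbar$ on $\mathfrak H$: $\mathcal C$-bilinear with $w\,\mathrm{sh}_\hbar\,1=1\,\mathrm{sh}_\hbar\,w=w$, $wa\,\mathrm{sh}_\hbar\,w'a=(wa\,\mathrm{sh}_\hbar\,w'+w\,\mathrm{sh}_\hbar\,w'a+\hbar(w\,\mathrm{sh}_\hbar\,w'))a$,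 $wb\,\mathrm{sh}_\hbar\,w'=w\,\mathrm{sh}_\hbar\,w'b=(w\,\mathrm{sh}_\hbar\,w')b$; $\mathcal C\langle A\rangle$ is closed under it. Classical side: $\mathfrak h=\mathbb{Q}\langle x,y\rangle$, $z_k=yx^{k-1}$, $\mathfrak h^1=\mathbb Q+y\mathfrak h$ (the free algebra on $z_1,z_2,\dots$). Harmonic product $\ast$ on $\mathfrak h^1$: $w\ast1=1\ast w=w$, $(wz_k)\ast(w'z_l)=(w\ast w'z_l)z_k+(wz_k\ast w')z_l+(w\ast w')z_{k+l}$; shuffle product $\mathrm{sh}$ on $\mathfrak h$: $w\,\mathrm{sh}\,1=1\,\mathrm{sh}\,w=w$, $(wu)\,\mathrm{sh}\,(w'v)=(w\,\mathrm{sh}\,w'v)u+(wu\,\mathrm{sh}\,w')v$ ($u,v\in\{x,y\}$). $\iota:\mathcal C\langle A\rangle\to\mathfrak h^1$ is the unital $\mathbb Q$-algebra homomorphism (for concatenation) with $\iota(\hbar)=0$, $\iota(\hbar b)=0$ and $\iota(g_k)=z_k$ for $k\ge1$. *)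

theory Defs
  imports "HOL-Computational_Algebra.Polynomial"
begin

text \<open>A (finite) linear combination of words of type 'w with coefficients in 'c is
  represented as a function 'w => 'c (finitely supported where it matters).\<close>

definition mono :: "'c::zero_neq_one \<Rightarrow> 'w \<Rightarrow> 'w \<Rightarrow> 'c" where
  "mono c u = (\<lambda>v. if v = u then c else 0)"

definition lin :: "('a \<Rightarrow> 'c::comm_ring_1) \<Rightarrow> ('a \<Rightarrow> 'b \<Rightarrow> 'c) \<Rightarrow> 'b \<Rightarrow> 'c" where
  "lin V F = (\<lambda>u. \<Sum>\<alpha>\<in>{\<alpha>. V \<alpha> \<noteq> 0}. V \<alpha> * F \<alpha> u)"

definition bilin :: "('a \<Rightarrow> 'c::comm_ring_1) \<Rightarrow> ('b \<Rightarrow> 'c) \<Rightarrow> ('a \<Rightarrow> 'b \<Rightarrow> 'd \<Rightarrow> 'c) \<Rightarrow> 'd \<Rightarrow> 'c" where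
  "bilin V W F = lin V (\<lambda>\<alpha>. lin W (F \<alpha>))"

text \<open>Prepending a letter on reversed words = appending it on the right of ordinary words.\<close>
definition prep :: "'l \<Rightarrow> ('l list \<Rightarrow> 'c::zero) \<Rightarrow> 'l list \<Rightarrow> 'c" where
  "prep l F = (\<lambda>x. case x of [] \<Rightarrow> 0 | y # ys \<Rightarrow> if y = l then F ys else 0)"

definition fsupp :: "('w \<Rightarrow> 'c::zero) \<Rightarrow> bool" where
  "fsupp f \<longleftrightarrow> finite {u. f u \<noteq> 0}"

datatype ab = La | Lb

type_synonym hel = "ab list \<Rightarrow> rat poly"

definition hbar :: "rat poly" where "hbar = [:0, 1:]"

text \<open>Letters of A: HB stands for hbar b, G k stands for g_k = b a^k (k >= 1).\<close>
datatype Alet = HB | G nat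

definition admA :: "Alet list \<Rightarrow> bool" where
  "admA \<alpha> \<longleftrightarrow> (\<forall>k. G k \<in> set \<alpha> \<longrightarrow> 1 \<le> k)"

fun lw :: "Alet \<Rightarrow> ab list" where
  "lw HB = [Lb]"
| "lw (G k) = Lb # replicate k La"

definition embw :: "Alet list \<Rightarrow> hel" where
  "embw \<alpha> = mono (hbar ^ length (filter (\<lambda>l. l = HB) \<alpha>)) (concat (map lw \<alpha>))"

definition Areps :: "(Alet list \<Rightarrow> rat poly) set" where
  "Areps = {V. fsupp V \<and> (\<forall>\<alpha>. V \<alpha> \<noteq> 0 \<longrightarrow> admA \<alpha>)}"

text \<open>C<A>: the C-subalgebra of \<open>\<frak>H\<close> generated by 1 and A (= C-span of products of elements of A).\<close>
definition CA :: "hel set" where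
  "CA = {lin V embw | V. V \<in> Areps}"

text \<open>Coordinates of an element of C<A> w.r.t. the (algebraically independent) set A.\<close>
definition Arep :: "hel \<Rightarrow> Alet list \<Rightarrow> rat poly" where
  "Arep f = (THE V. V \<in> Areps \<and> lin V embw = f)"

fun circA :: "Alet \<Rightarrow> Alet \<Rightarrow> rat poly \<times> Alet" where
  "circA HB HB = (hbar, HB)"
| "circA HB (G k) = (hbar, G k)"
| "circA (G k) HB = (hbar, G k)"
| "circA (G k) (G l) = (1, G (k + l))"

text \<open>Harmonic product of A-words, computed on reversed words (last letter first).\<close>
fun harmR :: "Alet list \<Rightarrow> Alet list \<Rightarrow> Alet list \<Rightarrow> rat poly" where
  "harmR [] w = mono 1 w"
| "harmR w [] = mono 1 w"
| "harmR (u # w) (v # w') =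
     (\<lambda>x. prep u (harmR w (v # w')) x + prep v (harmR (u # w) w') x
          + fst (circA u v) * prep (snd (circA u v)) (harmR w w') x)"

definition harmA :: "Alet list \<Rightarrow> Alet list \<Rightarrow> Alet list \<Rightarrow> rat poly" where
  "harmA \<alpha> \<beta> = (\<lambda>\<gamma>. harmR (rev \<alpha>) (rev \<beta>) (rev \<gamma>))"

definition harmH :: "hel \<Rightarrow> hel \<Rightarrow> hel" where
  "harmH f g = lin (bilin (Arep f) (Arep g) harmA) embw"

fun shHR :: "ab list \<Rightarrow> ab list \<Rightarrow> ab list \<Rightarrow> rat poly" where
  "shHR [] w = mono 1 w"
| "shHR w [] = mono 1 w"
| "shHR (Lb # w) w' = prep Lb (shHR w w')"
| "shHR w (Lb # w') = prep Lb (shHR w w')"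
| "shHR (La # w) (La # w') =
     prep La (\<lambda>x. shHR (La # w) w' x + shHR w (La # w') x + hbar * shHR w w' x)"

definition shHw :: "ab list \<Rightarrow> ab list \<Rightarrow> ab list \<Rightarrow> rat poly" where
  "shHw u v = (\<lambda>x. shHR (rev u) (rev v) (rev x))"

definition shH :: "hel \<Rightarrow> hel \<Rightarrow> hel" where
  "shH f g = bilin f g shHw"

datatype xy = X | Y

type_synonym hcl = "xy list \<Rightarrow> rat"

text \<open>z_k = y x^(k-1); a word in the z's is given by its index list.\<close>
definition zw :: "nat list \<Rightarrow> xy list" where
  "zw ks = concat (map (\<lambda>k. Y # replicate (k - 1) X) ks)"

definition Zreps :: "(nat list \<Rightarrow> rat) set" where
  "Zreps = {K. fsupp K \<and> (\<forall>ks. K ks \<noteq> 0 \<longrightarrow> (\<forall>k\<in>set ks. 1 \<le> k))}"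

definition Zrep :: "hcl \<Rightarrow> nat list \<Rightarrow> rat" where
  "Zrep f = (THE K. K \<in> Zreps \<and> lin K (\<lambda>ks. mono 1 (zw ks)) = f)"

fun harmZR :: "nat list \<Rightarrow> nat list \<Rightarrow> nat list \<Rightarrow> rat" where
  "harmZR [] w = mono 1 w"
| "harmZR w [] = mono 1 w"
| "harmZR (k # w) (l # w') =
     (\<lambda>x. prep k (harmZR w (l # w')) x + prep l (harmZR (k # w) w') x
          + prep (k + l) (harmZR w w') x)"

definition harmZ :: "nat list \<Rightarrow> nat list \<Rightarrow> nat list \<Rightarrow> rat" where
  "harmZ ks ls = (\<lambda>ms. harmZR (rev ks) (rev ls) (rev ms))"

definition harmC :: "hcl \<Rightarrow> hcl \<Rightarrow> hcl" where
  "harmC f g = lin (bilin (Zrep f) (Zrep g) harmZ) (\<lambda>ks. mono 1 (zw ks))"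

fun shCR :: "xy list \<Rightarrow> xy list \<Rightarrow> xy list \<Rightarrow> rat" where
  "shCR [] w = mono 1 w"
| "shCR w [] = mono 1 w"
| "shCR (u # w) (v # w') = (\<lambda>x. prep u (shCR w (v # w')) x + prep v (shCR (u # w) w') x)"

definition shCw :: "xy list \<Rightarrow> xy list \<Rightarrow> xy list \<Rightarrow> rat" where
  "shCw u v = (\<lambda>x. shCR (rev u) (rev v) (rev x))"

definition shC :: "hcl \<Rightarrow> hcl \<Rightarrow> hcl" where
  "shC f g = bilin f g shCw"

text \<open>iota on A-words: the concatenation homomorphism with iota(hbar b) = 0, iota(g_k) = z_k.\<close>
fun iletter :: "Alet \<Rightarrow> nat option" where
  "iletter HB = None"
| "iletter (G k) = Some k"

definition iwA :: "Alet list \<Rightarrow> hcl" where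
  "iwA \<alpha> = (if HB \<in> set \<alpha> then (\<lambda>_. 0)
            else mono 1 (zw (map (\<lambda>l. case l of G k \<Rightarrow> k | HB \<Rightarrow> 0) \<alpha>)))"

text \<open>iota(c * alpha) = c(0) * iota(alpha), since iota(hbar) = 0 (Q-algebra map Q[hbar] -> Q).\<close>
definition iota :: "hel \<Rightarrow> hcl" where
  "iota f = lin (\<lambda>\<alpha>. poly (Arep f \<alpha>) 0) iwA"

end

theory Submission
  imports Defs
begin

text \<open>Both products are bilinear, and \<open>\<iota>\<close> sets \<open>\<hbar> = 0\<close> and kills the
  letter \<open>\<hbar>b\<close>. For \<open>\<ast>\<^sub>\<hbar>\<close> this is pushed through the recursion on A-words directly:
  a term that absorbs a letter \<open>\<hbar>b\<close> carries a factor \<open>\<hbar>\<close>, and on words in the \<open>g\<^sub>k\<close>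
  the recursion is that of \<open>\<ast>\<close> on the \<open>z\<^sub>k\<close>.

  For \<open>sh\<^sub>\<hbar>\<close>, which is defined on \<open>\<frak>H\<close>, one first shows that \<open>C<A>\<close> is closed under it:
  \<open>C<A>\<close> consists of the finitely supported elements living on words that start with \<open>b\<close>
  whose coefficient at \<open>u\<close> is divisible by \<open>\<hbar>\<close> to the number of \<open>b\<close>'s of \<open>u\<close> not followed
  by \<open>a\<close>, and this divisibility survives shuffling. Then \<open>\<iota>(f)\<close> is the coefficient of \<open>f\<close>
  at the image of \<open>x \<mapsto> a, y \<mapsto> ba\<close> evaluated at \<open>\<hbar> = 0\<close>, and at \<open>\<hbar> = 0\<close> the shuffle
  of such images is the classical shuffle.\<close>

section \<open>Finitely supported linear combinations\<close>

lemma prep_Nil [simp]: "prep l F [] = 0"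
  and prep_Cons [simp]: "prep l F (m # t) = (if m = l then F t else 0)"
  by (simp_all add: prep_def)

lemma prep_nonzero_imp: "prep l F t \<noteq> 0 \<Longrightarrow> \<exists>t'. t = l # t' \<and> F t' \<noteq> 0"
  by (cases t) (auto split: if_splits)

lemma mono_one_Cons: "mono 1 (l # r) = prep l (mono 1 r)"
  by (auto simp: mono_def prep_def fun_eq_iff split: list.splits)

lemma lin_nonzero_imp: "lin V F u \<noteq> 0 \<Longrightarrow> \<exists>\<alpha>. V \<alpha> \<noteq> 0 \<and> F \<alpha> u \<noteq> 0"
  unfolding lin_def by (metis (mono_tags, lifting) mem_Collect_eq mult_zero_right sum.neutral)

lemma bilin_nonzero_imp:
  "bilin V W F d \<noteq> 0 \<Longrightarrow> \<exists>\<alpha> \<beta>. V \<alpha> \<noteq> 0 \<and> W \<beta> \<noteq> 0 \<and> F \<alpha> \<beta> d \<noteq> 0"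
  unfolding bilin_def by (blast dest: lin_nonzero_imp)

lemma lin_eq_single:
  assumes "fsupp V" and "\<And>\<alpha>. V \<alpha> \<noteq> 0 \<Longrightarrow> \<alpha> \<noteq> a \<Longrightarrow> F \<alpha> u = 0"
  shows "lin V F u = V a * F a u"
proof -
  have "lin V F u = (\<Sum>\<alpha>\<in>{\<alpha>. V \<alpha> \<noteq> 0} \<union> {a}. V \<alpha> * F \<alpha> u)"
    unfolding lin_def using assms by (intro sum.mono_neutral_left) (auto simp: fsupp_def)
  also have "\<dots> = (\<Sum>\<alpha>\<in>{a}. V \<alpha> * F \<alpha> u)"
    using assms by (intro sum.mono_neutral_right) (auto simp: fsupp_def)
  finally show ?thesis by simp
qed

lemma lin_coordinates_unique:
  fixes V W :: "'a \<Rightarrow> 'c::idom"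
  assumes fin: "fsupp V" "fsupp W"
    and supp: "\<And>\<alpha>. V \<alpha> \<noteq> 0 \<Longrightarrow> P \<alpha>" "\<And>\<alpha>. W \<alpha> \<noteq> 0 \<Longrightarrow> P \<alpha>"
    and dual: "\<And>\<alpha> \<beta>. P \<alpha> \<Longrightarrow> P \<beta> \<Longrightarrow> F \<beta> (e \<alpha>) = (if \<beta> = \<alpha> then d \<alpha> else 0)"
    and d: "\<And>\<alpha>. P \<alpha> \<Longrightarrow> d \<alpha> \<noteq> 0"
    and eq: "lin V F = lin W F"
  shows "V = W"
proof
  fix \<alpha>
  show "V \<alpha> = W \<alpha>"
  proof (cases "P \<alpha>")
    case True
    have "lin V F (e \<alpha>) = V \<alpha> * d \<alpha>" "lin W F (e \<alpha>) = W \<alpha> * d \<alpha>"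
      using lin_eq_single[OF fin(1), of \<alpha> F "e \<alpha>"] lin_eq_single[OF fin(2), of \<alpha> F "e \<alpha>"]
        supp dual True by auto
    with eq d[OF True] show ?thesis by simp
  next
    case False
    then have "V \<alpha> = 0" "W \<alpha> = 0" using supp by blast+
    then show ?thesis by simp
  qed
qed

lemma fsupp_subset: "fsupp g \<Longrightarrow> (\<And>x. f x \<noteq> 0 \<Longrightarrow> g x \<noteq> 0) \<Longrightarrow> fsupp f"
  unfolding fsupp_def by (rule finite_subset[of _ "{x. g x \<noteq> 0}"]) auto

lemma fsupp_comp_inj: "fsupp f \<Longrightarrow> inj h \<Longrightarrow> fsupp (\<lambda>x. f (h x))"
  unfolding fsupp_def by (drule finite_vimageI) (auto simp: vimage_def)

lemma fsupp_mono: "fsupp (mono c w)"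
  unfolding fsupp_def mono_def by (rule finite_subset[of _ "{w}"]) auto

lemma fsupp_prep: "fsupp F \<Longrightarrow> fsupp (prep l F)"
  unfolding fsupp_def
  by (rule finite_subset[of _ "Cons l ` {x. F x \<noteq> 0}"]) (auto dest!: prep_nonzero_imp)

lemma fsupp_add: "fsupp (f :: 'a \<Rightarrow> 'b::comm_monoid_add) \<Longrightarrow> fsupp g \<Longrightarrow> fsupp (\<lambda>x. f x + g x)"
  unfolding fsupp_def by (rule finite_subset[of _ "{x. f x \<noteq> 0} \<union> {x. g x \<noteq> 0}"]) auto

lemma fsupp_mult_left: "fsupp (F :: 'a \<Rightarrow> 'b::mult_zero) \<Longrightarrow> fsupp (\<lambda>x. c * F x)"
  by (erule fsupp_subset) auto

lemma fsupp_bilin: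
  assumes "fsupp V" "fsupp W" "\<And>\<alpha> \<beta>. fsupp (F \<alpha> \<beta>)"
  shows "fsupp (bilin V W F)"
proof -
  have "{d. bilin V W F d \<noteq> 0} \<subseteq> (\<Union>\<alpha>\<in>{\<alpha>. V \<alpha> \<noteq> 0}. \<Union>\<beta>\<in>{\<beta>. W \<beta> \<noteq> 0}. {d. F \<alpha> \<beta> d \<noteq> 0})"
    by (blast dest: bilin_nonzero_imp)
  moreover have "finite (\<Union>\<alpha>\<in>{\<alpha>. V \<alpha> \<noteq> 0}. \<Union>\<beta>\<in>{\<beta>. W \<beta> \<noteq> 0}. {d. F \<alpha> \<beta> d \<noteq> 0})"
    using assms unfolding fsupp_def by (intro finite_UN_I) auto
  ultimately show ?thesis unfolding fsupp_def by (rule finite_subset)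
qed

lemma sum_nonzero_reindex:
  fixes c T :: "'a \<Rightarrow> 'r::semiring_0"
  assumes S: "finite S" "{x. c x \<noteq> 0} \<subseteq> S" and h: "inj h"
    and onto: "\<And>x. c x \<noteq> 0 \<Longrightarrow> T x \<noteq> 0 \<Longrightarrow> x \<in> range h"
  shows "(\<Sum>x\<in>S. c x * T x) = (\<Sum>y | c (h y) \<noteq> 0. c (h y) * T (h y))"
proof -
  have "(\<Sum>x\<in>S. c x * T x) = (\<Sum>x\<in>h ` {y. c (h y) \<noteq> 0}. c x * T x)"
  proof (rule sum.mono_neutral_right[OF S(1)])
    show "h ` {y. c (h y) \<noteq> 0} \<subseteq> S" using S(2) by auto
    show "\<forall>x\<in>S - h ` {y. c (h y) \<noteq> 0}. c x * T x = 0"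
    proof
      fix x assume x: "x \<in> S - h ` {y. c (h y) \<noteq> 0}"
      show "c x * T x = 0"
      proof (rule ccontr)
        assume "c x * T x \<noteq> 0"
        then have "c x \<noteq> 0" "T x \<noteq> 0" by auto
        then obtain y where "x = h y" using onto by blast
        then show False using x \<open>c x \<noteq> 0\<close> by auto
      qed
    qed
  qed
  also have "\<dots> = (\<Sum>y | c (h y) \<noteq> 0. c (h y) * T (h y))"
    by (rule sum.reindex[OF inj_on_subset[OF h], simplified])
  finally show ?thesis .
qed

lemma power_dvd_mult_shift:
  fixes p x :: "'a::idom"
  assumes "p \<noteq> 0" "p ^ a dvd p ^ b * x" "a' + b \<le> a + b'"
  shows "p ^ a' dvd p ^ b' * x"
proof -
  have "p ^ (a' + b) dvd p ^ (a + b')" using assms(3) by (rule le_imp_power_dvd)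
  also have "p ^ (a + b') dvd p ^ b * x * p ^ b'"
    using assms(2) by (simp add: power_add mult_dvd_mono)
  finally have "p ^ a' * p ^ b dvd (p ^ b' * x) * p ^ b"
    by (simp add: power_add ac_simps)
  then show ?thesis using assms(1) by simp
qed


section \<open>A-words and their spelling in \<open>a, b\<close>\<close>

definition ab_word :: "Alet list \<Rightarrow> ab list" where
  "ab_word \<alpha> = concat (map lw \<alpha>)"

definition hb_count :: "Alet list \<Rightarrow> nat" where
  "hb_count \<alpha> = length (filter (\<lambda>l. l = HB) \<alpha>)"

text \<open>The letters \<open>\<hbar>b\<close> of an A-word spell exactly the occurrences of \<open>b\<close> that are
  not followed by \<open>a\<close>.\<close>
fun lone_bs :: "ab list \<Rightarrow> nat" where
  "lone_bs [] = 0"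
| "lone_bs (La # w) = lone_bs w"
| "lone_bs (Lb # w) = (if w = [] \<or> hd w = Lb then 1 else 0) + lone_bs w"

function parse :: "ab list \<Rightarrow> Alet list" where
  "parse [] = []"
| "parse (La # w) = parse w"
| "parse (Lb # w) = (let n = length (takeWhile (\<lambda>c. c = La) w) in
      (if n = 0 then HB else G n) # parse (drop n w))"
  by pat_completeness auto
termination by (relation "measure length") auto

lemma ab_word_Nil [simp]: "ab_word [] = []"
  and ab_word_Cons [simp]: "ab_word (l # \<alpha>) = lw l @ ab_word \<alpha>"
  by (simp_all add: ab_word_def)

lemma ab_word_Nil_or_Lb: "ab_word \<alpha> = [] \<or> hd (ab_word \<alpha>) = Lb"
  by (cases \<alpha>) (simp, case_tac a, simp_all)

lemma admA_Nil [simp]: "admA []"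
  and admA_Cons [simp]: "admA (l # \<alpha>) \<longleftrightarrow> (\<forall>k. l = G k \<longrightarrow> 1 \<le> k) \<and> admA \<alpha>"
  by (auto simp: admA_def)

lemma admA_map_G [simp]: "admA (map G ks) \<longleftrightarrow> (\<forall>k\<in>set ks. 1 \<le> k)"
  by (auto simp: admA_def)

lemma hb_count_eq_0_iff: "hb_count \<alpha> = 0 \<longleftrightarrow> HB \<notin> set \<alpha>"
  by (auto simp: hb_count_def filter_empty_conv)

lemma HB_free_admA_imp_map_G:
  "HB \<notin> set \<alpha> \<Longrightarrow> admA \<alpha> \<Longrightarrow> \<exists>ks. \<alpha> = map G ks \<and> (\<forall>k\<in>set ks. 1 \<le> k)"
proof (induction \<alpha>)
  case (Cons l \<alpha>)
  then obtain k ks where "l = G k" "1 \<le> k" "\<alpha> = map G ks" "\<forall>k\<in>set ks. 1 \<le> k"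
    by (cases l) auto
  then show ?case by (intro exI[of _ "k # ks"]) simp
qed simp

lemma takeWhile_La_replicate:
  "w = [] \<or> hd w = Lb \<Longrightarrow> takeWhile (\<lambda>c. c = La) (replicate k La @ w) = replicate k La"
  by (induction k) (cases w; auto)+

lemma parse_ab_word: "admA \<alpha> \<Longrightarrow> parse (ab_word \<alpha>) = \<alpha>"
proof (induction \<alpha>)
  case (Cons l \<alpha>)
  have start: "ab_word \<alpha> = [] \<or> hd (ab_word \<alpha>) = Lb" by (rule ab_word_Nil_or_Lb)
  show ?case
  proof (cases l)
    case HB
    with Cons start show ?thesis by (cases "ab_word \<alpha>") (auto simp: Let_def)
  next
    case (G k)
    with Cons takeWhile_La_replicate[OF start, of k] show ?thesis by (simp add: Let_def)
  qed
qed simp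

lemma ab_word_inj: "admA \<alpha> \<Longrightarrow> admA \<beta> \<Longrightarrow> ab_word \<alpha> = ab_word \<beta> \<Longrightarrow> \<alpha> = \<beta>"
  by (metis parse_ab_word)

lemma admA_parse: "admA (parse u)"
  by (induction u rule: parse.induct) (auto simp: Let_def Suc_le_eq)

lemma ab_word_parse: "u = [] \<or> hd u = Lb \<Longrightarrow> ab_word (parse u) = u"
proof (induction u rule: parse.induct)
  case (3 w)
  define n where "n = length (takeWhile (\<lambda>c. c = La) w)"
  have "takeWhile (\<lambda>c. c = La) w = replicate n La"
    unfolding n_def by (rule replicate_length_same[symmetric]) (auto dest: set_takeWhileD)
  moreover have "take n w = takeWhile (\<lambda>c. c = La) w"
    unfolding n_def by (rule takeWhile_eq_take[symmetric])
  ultimately have split: "replicate n La @ drop n w = w"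
    by (metis append_take_drop_id)
  have "drop n w = dropWhile (\<lambda>c. c = La) w"
    unfolding n_def by (simp add: dropWhile_eq_drop)
  then have "drop n w = [] \<or> hd (drop n w) = Lb"
    using hd_dropWhile[of "\<lambda>c. c = La" w] by (metis ab.exhaust)
  with "3.IH"[OF n_def] have "ab_word (parse (drop n w)) = drop n w" by simp
  moreover have "parse (Lb # w) = (if n = 0 then HB else G n) # parse (drop n w)"
    by (simp add: Let_def n_def)
  ultimately show ?case using split by simp
qed simp_all

lemma lone_bs_replicate_La [simp]: "lone_bs (replicate k La @ w) = lone_bs w"
  by (induction k) auto

lemma lone_bs_ab_word: "admA \<alpha> \<Longrightarrow> lone_bs (ab_word \<alpha>) = hb_count \<alpha>"
proof (induction \<alpha>)
  case Nil
  then show ?case by (simp add: hb_count_def)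
next
  case (Cons l \<alpha>)
  show ?case
  proof (cases l)
    case HB
    with Cons ab_word_Nil_or_Lb[of \<alpha>] show ?thesis by (auto simp: hb_count_def)
  next
    case (G k)
    with Cons obtain j where "k = Suc j" by (cases k) auto
    with Cons G show ?thesis by (simp add: hb_count_def)
  qed
qed


section \<open>Coordinates in \<open>C<A>\<close>\<close>

lemma hbar_nonzero [simp]: "hbar \<noteq> 0"
  by (simp add: hbar_def)

lemma poly_hbar_0 [simp]: "poly hbar 0 = 0"
  by (simp add: hbar_def)

lemma embw_eq: "embw \<alpha> u = (if u = ab_word \<alpha> then hbar ^ hb_count \<alpha> else 0)"
  by (simp add: embw_def mono_def ab_word_def hb_count_def)

lemma lin_embw:
  assumes "V \<in> Areps"
  shows "lin V embw u =
    (if ab_word (parse u) = u then V (parse u) * hbar ^ hb_count (parse u) else 0)"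
proof -
  have "lin V embw u = V (parse u) * embw (parse u) u"
  proof (rule lin_eq_single)
    show "fsupp V" using assms by (simp add: Areps_def)
    show "embw \<alpha> u = 0" if "V \<alpha> \<noteq> 0" "\<alpha> \<noteq> parse u" for \<alpha>
      using that assms parse_ab_word by (auto simp: Areps_def embw_eq)
  qed
  then show ?thesis by (auto simp: embw_eq)
qed

lemma Arep_lin: "V \<in> Areps \<Longrightarrow> Arep (lin V embw) = V"
  unfolding Arep_def
proof (rule the_equality)
  fix W assume V: "V \<in> Areps" and W: "W \<in> Areps \<and> lin W embw = lin V embw"
  show "W = V"
  proof (rule lin_coordinates_unique[where P = admA and e = ab_word])
    show "embw \<beta> (ab_word \<alpha>) = (if \<beta> = \<alpha> then hbar ^ hb_count \<alpha> else 0)"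
      if "admA \<alpha>" "admA \<beta>" for \<alpha> \<beta>
      using that ab_word_inj by (auto simp: embw_eq)
  qed (use V W in \<open>auto simp: Areps_def\<close>)
qed simp

lemma Arep_CA: "f \<in> CA \<Longrightarrow> Arep f \<in> Areps \<and> lin (Arep f) embw = f"
  unfolding CA_def using Arep_lin by auto

text \<open>Intrinsic description of \<open>C<A>\<close>: every \<open>\<hbar>b\<close> of an A-word contributes one factor
  \<open>\<hbar>\<close> and one \<open>b\<close> not followed by \<open>a\<close>.\<close>
definition CA_like :: "hel \<Rightarrow> bool" where
  "CA_like f \<longleftrightarrow> fsupp f \<and> (\<forall>u. f u \<noteq> 0 \<longrightarrow> (u = [] \<or> hd u = Lb) \<and> hbar ^ lone_bs u dvd f u)"

lemma CA_imp_CA_like: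
  assumes "f \<in> CA"
  shows "CA_like f"
proof -
  obtain V where V: "V \<in> Areps" and f: "f = lin V embw"
    using assms by (auto simp: CA_def)
  have f_eq: "f u = (if ab_word (parse u) = u then V (parse u) * hbar ^ hb_count (parse u) else 0)"
    for u using lin_embw[OF V] f by simp
  have "{u. f u \<noteq> 0} \<subseteq> ab_word ` {\<alpha>. V \<alpha> \<noteq> 0}"
  proof
    fix u assume "u \<in> {u. f u \<noteq> 0}"
    then have "u = ab_word (parse u)" "V (parse u) \<noteq> 0" by (auto simp: f_eq split: if_splits)
    then show "u \<in> ab_word ` {\<alpha>. V \<alpha> \<noteq> 0}" by blast
  qed
  with V have "fsupp f"
    unfolding fsupp_def Areps_def by (auto intro: finite_subset)
  moreover have "(u = [] \<or> hd u = Lb) \<and> hbar ^ lone_bs u dvd f u" if "f u \<noteq> 0" for u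
  proof -
    have u: "ab_word (parse u) = u" using that by (auto simp: f_eq split: if_splits)
    then have "lone_bs u = hb_count (parse u)"
      using lone_bs_ab_word[OF admA_parse, of u] by simp
    with u ab_word_Nil_or_Lb[of "parse u"] show ?thesis by (auto simp: f_eq)
  qed
  ultimately show ?thesis unfolding CA_like_def by blast
qed

lemma CA_like_imp_CA:
  assumes "CA_like f"
  shows "f \<in> CA"
proof -
  have fin: "fsupp f" and f: "\<And>u. f u \<noteq> 0 \<Longrightarrow> (u = [] \<or> hd u = Lb) \<and> hbar ^ lone_bs u dvd f u"
    using assms by (auto simp: CA_like_def)
  define V where "V \<alpha> = (if admA \<alpha> then f (ab_word \<alpha>) div hbar ^ hb_count \<alpha> else 0)" for \<alpha>
  have "{\<alpha>. V \<alpha> \<noteq> 0} \<subseteq> parse ` {u. f u \<noteq> 0}"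
  proof
    fix \<alpha> assume "\<alpha> \<in> {\<alpha>. V \<alpha> \<noteq> 0}"
    then have "\<alpha> = parse (ab_word \<alpha>)" "f (ab_word \<alpha>) \<noteq> 0"
      by (auto simp: V_def parse_ab_word split: if_splits)
    then show "\<alpha> \<in> parse ` {u. f u \<noteq> 0}" by blast
  qed
  with fin have "fsupp V"
    unfolding fsupp_def by (blast intro: finite_subset)
  then have V: "V \<in> Areps"
    unfolding Areps_def by (simp add: V_def)
  have "lin V embw u = f u" for u
  proof (cases "ab_word (parse u) = u")
    case True
    then have "lone_bs u = hb_count (parse u)"
      using lone_bs_ab_word[OF admA_parse, of u] by simp
    with True f[of u] show ?thesis
      by (cases "f u = 0") (auto simp: lin_embw[OF V] V_def admA_parse)
  next
    case False
    then have "f u = 0" using f[of u] ab_word_parse[of u] by blast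
    with False show ?thesis by (simp add: lin_embw[OF V])
  qed
  then have "lin V embw = f" by (rule ext)
  with V show ?thesis unfolding CA_def by blast
qed


section \<open>Closure of \<open>C<A>\<close> under \<open>sh_\<hbar>\<close>\<close>

text \<open>The shuffle recursion runs on reversed words, so we count lone \<open>b\<close>'s there too.\<close>
definition rlone_bs :: "ab list \<Rightarrow> nat" where
  "rlone_bs r = lone_bs (rev r)"

definition b_headed :: "ab list \<Rightarrow> bool" where
  "b_headed r \<longleftrightarrow> r \<noteq> [] \<and> hd r = Lb"

lemma b_headed_simps [simp]: "\<not> b_headed []" "\<not> b_headed (La # r)" "b_headed (Lb # r)"
  by (simp_all add: b_headed_def)

lemma lone_bs_pos_if_last_Lb: "w \<noteq> [] \<Longrightarrow> last w = Lb \<Longrightarrow> 1 \<le> lone_bs w"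
  by (induction w rule: lone_bs.induct) (auto split: if_splits)

lemma lone_bs_snoc_Lb: "lone_bs (w @ [Lb]) = lone_bs w + 1"
  by (induction w rule: lone_bs.induct) (auto simp: hd_append)

lemma lone_bs_snoc_La: "lone_bs (w @ [La]) = lone_bs w - (if w \<noteq> [] \<and> last w = Lb then 1 else 0)"
proof (induction w rule: lone_bs.induct)
  case (3 w)
  then show ?case
    using lone_bs_pos_if_last_Lb[of w] by (cases "w = []") (auto simp: hd_append)
qed simp_all

lemma rlone_bs_Nil [simp]: "rlone_bs [] = 0"
  and rlone_bs_Lb [simp]: "rlone_bs (Lb # r) = rlone_bs r + 1"
  and rlone_bs_La [simp]: "rlone_bs (La # r) = rlone_bs r - (if b_headed r then 1 else 0)"
  by (auto simp: rlone_bs_def b_headed_def lone_bs_snoc_Lb lone_bs_snoc_La last_rev)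

lemma rlone_bs_pos: "b_headed r \<Longrightarrow> 1 \<le> rlone_bs r"
  by (cases r) (auto simp: b_headed_def)

lemma shHR_Nil_right [simp]: "shHR w [] = mono 1 w"
  by (cases w) auto

lemma shHR_Lb_left: "shHR (Lb # r) s = prep Lb (shHR r s)"
  by (cases s) (auto simp: mono_one_Cons)

lemma shHR_nonzero_Nil: "shHR u v [] \<noteq> 0 \<Longrightarrow> u = [] \<and> v = []"
  by (cases "(u, v)" rule: shHR.cases) (auto simp: prep_def mono_def split: if_splits)

lemma shHR_b_headed_left: "shHR u v t \<noteq> 0 \<Longrightarrow> b_headed u \<Longrightarrow> b_headed t"
  by (cases u) (auto simp: b_headed_def shHR_Lb_left dest!: prep_nonzero_imp)

lemma shHR_b_headed_right: "shHR u v t \<noteq> 0 \<Longrightarrow> b_headed v \<Longrightarrow> b_headed t"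
proof (cases v)
  case (Cons l s)
  assume nz: "shHR u v t \<noteq> 0" and "b_headed v"
  with Cons have v: "v = Lb # s" by (simp add: b_headed_def)
  show ?thesis
  proof (cases u)
    case Nil
    with nz v show ?thesis by (auto simp: b_headed_def mono_def split: if_splits)
  next
    case (Cons x r)
    with nz v show ?thesis
      by (cases x) (auto simp: b_headed_def shHR_Lb_left dest!: prep_nonzero_imp)
  qed
qed simp

lemma fsupp_shHR: "fsupp (shHR u v)"
  by (induction u v rule: shHR.induct)
     (auto intro!: fsupp_prep fsupp_add fsupp_mult_left fsupp_mono)

lemma shHR_last_Lb:
  "shHR u v t \<noteq> 0 \<Longrightarrow> (u = [] \<or> last u = Lb) \<Longrightarrow> (v = [] \<or> last v = Lb) \<Longrightarrow> (t = [] \<or> last t = Lb)"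
proof (induction u v arbitrary: t rule: shHR.induct)
  case (3 w v va)
  then obtain t' where "t = Lb # t'" "shHR w (v # va) t' \<noteq> 0" by (auto dest!: prep_nonzero_imp)
  with 3 show ?case by (auto split: if_splits)
next
  case (4 va w')
  then obtain t' where "t = Lb # t'" "shHR (La # va) w' t' \<noteq> 0" by (auto dest!: prep_nonzero_imp)
  with 4 show ?case by (auto split: if_splits)
next
  case (5 w w')
  then obtain t' where t: "t = La # t'"
    and nz: "shHR (La # w) w' t' + shHR w (La # w') t' + hbar * shHR w w' t' \<noteq> 0"
    by (auto dest!: prep_nonzero_imp)
  have w: "w \<noteq> []" "last w = Lb" and w': "w' \<noteq> []" "last w' = Lb"
    using "5.prems" by (auto split: if_splits)
  consider "shHR (La # w) w' t' \<noteq> 0" | "shHR w (La # w') t' \<noteq> 0" | "shHR w w' t' \<noteq> 0"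
    using nz by fastforce
  then have "t' \<noteq> [] \<and> last t' = Lb"
  proof cases
    case 1
    with "5.IH"(1) "5.prems" w' shHR_nonzero_Nil[of "La # w" w'] show ?thesis by auto
  next
    case 2
    with "5.IH"(2) "5.prems" w shHR_nonzero_Nil[of w "La # w'"] show ?thesis by auto
  next
    case 3
    with "5.IH"(3) w w' shHR_nonzero_Nil[of w w'] show ?thesis by auto
  qed
  with t show ?case by simp
qed (auto simp: mono_def split: if_splits)

text \<open>When two trailing \<open>a\<close>'s are merged, a \<open>b\<close> in front of one of them may become
  lone; the factor \<open>\<hbar>\<close> of the merging term pays for it.\<close>
lemma hbar_power_dvd_shHR: "hbar ^ rlone_bs t dvd hbar ^ (rlone_bs u + rlone_bs v) * shHR u v t"
proof (induction u v arbitrary: t rule: shHR.induct)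
  case (3 w v va)
  show ?case
    by (cases t) (auto intro: power_dvd_mult_shift[OF hbar_nonzero "3"])
next
  case (4 va w')
  show ?case
    by (cases t) (auto intro: power_dvd_mult_shift[OF hbar_nonzero "4"])
next
  case (5 w w')
  show ?case
  proof (cases t)
    case (Cons m t')
    let ?A = "shHR (La # w) w' t'" and ?B = "shHR w (La # w') t'" and ?C = "shHR w w' t'"
    let ?e = "rlone_bs (La # w) + rlone_bs (La # w')"
    have A: "hbar ^ rlone_bs (La # t') dvd hbar ^ ?e * ?A"
    proof (cases "?A = 0")
      case False
      then have "b_headed w' \<Longrightarrow> b_headed t'" by (rule shHR_b_headed_right)
      with "5.IH"(1)[of t'] rlone_bs_pos[of w'] rlone_bs_pos[of t'] show ?thesis
        by (elim power_dvd_mult_shift[OF hbar_nonzero])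
          (cases "b_headed w'"; cases "b_headed t'"; simp)
    qed simp
    have B: "hbar ^ rlone_bs (La # t') dvd hbar ^ ?e * ?B"
    proof (cases "?B = 0")
      case False
      then have "b_headed w \<Longrightarrow> b_headed t'" by (rule shHR_b_headed_left)
      with "5.IH"(2)[of t'] rlone_bs_pos[of w] rlone_bs_pos[of t'] show ?thesis
        by (elim power_dvd_mult_shift[OF hbar_nonzero])
          (cases "b_headed w"; cases "b_headed t'"; simp)
    qed simp
    have C: "hbar ^ rlone_bs (La # t') dvd hbar ^ ?e * (hbar * ?C)"
    proof (cases "?C = 0")
      case False
      then have "b_headed w \<Longrightarrow> b_headed t'" "b_headed w' \<Longrightarrow> b_headed t'"
        by (auto intro: shHR_b_headed_left shHR_b_headed_right)
      with "5.IH"(3)[of t'] rlone_bs_pos[of w] rlone_bs_pos[of w'] rlone_bs_pos[of t']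
      have "hbar ^ rlone_bs (La # t') dvd hbar ^ (?e + 1) * ?C"
        by (elim power_dvd_mult_shift[OF hbar_nonzero])
          (cases "b_headed w"; cases "b_headed w'"; cases "b_headed t'"; simp)
      then show ?thesis by (simp add: ac_simps)
    qed simp
    from A B C show ?thesis
      by (auto simp: Cons distrib_left)
  qed simp
qed (simp_all add: mono_def)

lemma fsupp_shHw: "fsupp (shHw u v)"
  unfolding shHw_def by (rule fsupp_comp_inj[OF fsupp_shHR]) (simp add: inj_on_def)

lemma hbar_power_dvd_shHw: "hbar ^ lone_bs t dvd hbar ^ (lone_bs u + lone_bs v) * shHw u v t"
  using hbar_power_dvd_shHR[of "rev t" "rev u" "rev v"] by (simp add: rlone_bs_def shHw_def)

lemma shHw_nonzero_imp_Lb: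
  assumes "shHw u v t \<noteq> 0" "u = [] \<or> hd u = Lb" "v = [] \<or> hd v = Lb"
  shows "t = [] \<or> hd t = Lb"
  using shHR_last_Lb[of "rev u" "rev v" "rev t"] assms by (auto simp: shHw_def last_rev)

lemma CA_like_shH:
  assumes f: "CA_like f" and g: "CA_like g"
  shows "CA_like (shH f g)"
proof -
  have "fsupp (shH f g)"
    unfolding shH_def using f g by (intro fsupp_bilin fsupp_shHw) (simp_all add: CA_like_def)
  moreover have "t = [] \<or> hd t = Lb" if nz: "shH f g t \<noteq> 0" for t
  proof -
    obtain u v where "f u \<noteq> 0" "g v \<noteq> 0" "shHw u v t \<noteq> 0"
      using bilin_nonzero_imp[of f g shHw t] nz unfolding shH_def by blast
    with f g show ?thesis using shHw_nonzero_imp_Lb[of u v t] by (auto simp: CA_like_def)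
  qed
  moreover have "hbar ^ lone_bs t dvd shH f g t" for t
  proof -
    have "hbar ^ lone_bs t dvd f u * (g v * shHw u v t)" if "f u \<noteq> 0" "g v \<noteq> 0" for u v
    proof -
      have "hbar ^ lone_bs u dvd f u" "hbar ^ lone_bs v dvd g v"
        using that f g by (simp_all add: CA_like_def)
      then have "hbar ^ lone_bs u * hbar ^ lone_bs v * (hbar ^ lone_bs t)
          dvd f u * g v * (hbar ^ (lone_bs u + lone_bs v) * shHw u v t)"
        by (intro mult_dvd_mono hbar_power_dvd_shHw)
      then show ?thesis
        by (simp add: power_add ac_simps)
    qed
    then show ?thesis
      unfolding shH_def bilin_def lin_def sum_distrib_left by (intro dvd_sum) simp
  qed
  ultimately show ?thesis unfolding CA_like_def by blast
qed

lemma shH_CA: "f \<in> CA \<Longrightarrow> g \<in> CA \<Longrightarrow> shH f g \<in> CA"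
  by (rule CA_like_imp_CA[OF CA_like_shH[OF CA_imp_CA_like CA_imp_CA_like]])


section \<open>The classical limit and the shuffle product\<close>

fun ab_of_xy :: "xy list \<Rightarrow> ab list" where
  "ab_of_xy [] = []"
| "ab_of_xy (X # x) = La # ab_of_xy x"
| "ab_of_xy (Y # x) = Lb # La # ab_of_xy x"

fun rab_of_xy :: "xy list \<Rightarrow> ab list" where
  "rab_of_xy [] = []"
| "rab_of_xy (X # x) = La # rab_of_xy x"
| "rab_of_xy (Y # x) = La # Lb # rab_of_xy x"

lemma rab_of_xy_append: "rab_of_xy (x @ y) = rab_of_xy x @ rab_of_xy y"
  by (induction x rule: rab_of_xy.induct) simp_all

lemma rev_ab_of_xy: "rev (ab_of_xy x) = rab_of_xy (rev x)"
  by (induction x rule: ab_of_xy.induct) (simp_all add: rab_of_xy_append)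

lemma inj_ab_of_xy: "inj ab_of_xy"
proof (rule injI)
  show "ab_of_xy x = ab_of_xy y \<Longrightarrow> x = y" for x y
    by (induction x arbitrary: y rule: ab_of_xy.induct) (auto elim: ab_of_xy.elims[OF sym])
qed

lemma rab_of_xy_eq_iff [simp]: "rab_of_xy x = rab_of_xy y \<longleftrightarrow> x = y"
proof
  assume "rab_of_xy x = rab_of_xy y"
  then have "rev (ab_of_xy (rev x)) = rev (ab_of_xy (rev y))"
    by (simp add: rev_ab_of_xy)
  then have "ab_of_xy (rev x) = ab_of_xy (rev y)"
    by (simp only: rev_is_rev_conv)
  then show "x = y" using injD[OF inj_ab_of_xy] by fastforce
qed simp

lemma ab_of_xy_zw: "\<forall>k\<in>set ks. 1 \<le> k \<Longrightarrow> ab_of_xy (zw ks) = ab_word (map G ks)"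
proof (induction ks)
  case (Cons k ks)
  then obtain j where k: "k = Suc j" by (cases k) auto
  have "ab_of_xy (replicate j X @ w) = replicate j La @ ab_of_xy w" for w
    by (induction j) auto
  moreover have "zw (k # ks) = Y # replicate j X @ zw ks" by (simp add: zw_def k)
  ultimately show ?case using Cons by (simp add: k)
qed (simp add: zw_def)

text \<open>Setting \<open>\<hbar> = 0\<close> kills every A-word containing \<open>\<hbar>b\<close>; the spellings of the
  remaining ones are the images of \<open>x \<mapsto> a, y \<mapsto> ba\<close>.\<close>
definition classical_limit :: "hel \<Rightarrow> hcl" where
  "classical_limit f x = poly (f (ab_of_xy x)) 0"

lemma iwA_map_G: "iwA (map G ks) = mono 1 (zw ks)"
proof -
  have "map (\<lambda>l. case l of G k \<Rightarrow> k | HB \<Rightarrow> 0) (map G ks) = ks" by (induction ks) auto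
  then show ?thesis by (auto simp: iwA_def)
qed

lemma poly_embw_ab_of_xy:
  assumes "admA \<alpha>"
  shows "poly (embw \<alpha> (ab_of_xy x)) 0 = iwA \<alpha> x"
proof (cases "HB \<in> set \<alpha>")
  case True
  then have "hb_count \<alpha> \<noteq> 0" by (simp add: hb_count_eq_0_iff)
  with True show ?thesis by (simp add: embw_eq iwA_def zero_power)
next
  case False
  with assms obtain ks where \<alpha>: "\<alpha> = map G ks" and ks: "\<forall>k\<in>set ks. 1 \<le> k"
    using HB_free_admA_imp_map_G by blast
  have "iwA \<alpha> x = (if x = zw ks then 1 else 0)"
    by (simp add: \<alpha> iwA_map_G mono_def)
  moreover have "embw \<alpha> (ab_of_xy x) = (if ab_of_xy x = ab_of_xy (zw ks) then 1 else 0)"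
    using False ks hb_count_eq_0_iff[of \<alpha>] by (simp add: embw_eq ab_of_xy_zw \<alpha>)
  ultimately show ?thesis by (simp add: inj_eq[OF inj_ab_of_xy])
qed

lemma iota_eq_classical_limit:
  assumes "f \<in> CA"
  shows "iota f = classical_limit f"
proof
  fix x
  let ?V = "Arep f"
  have V: "?V \<in> Areps" and f: "lin ?V embw = f" using Arep_CA[OF assms] by blast+
  have "iota f x = (\<Sum>\<alpha> | poly (?V \<alpha>) 0 \<noteq> 0. poly (?V \<alpha>) 0 * iwA \<alpha> x)"
    by (simp add: iota_def lin_def)
  also have "\<dots> = (\<Sum>\<alpha> | ?V \<alpha> \<noteq> 0. poly (?V \<alpha>) 0 * iwA \<alpha> x)"
    using V by (intro sum.mono_neutral_left) (auto simp: Areps_def fsupp_def)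
  also have "\<dots> = (\<Sum>\<alpha> | ?V \<alpha> \<noteq> 0. poly (?V \<alpha>) 0 * poly (embw \<alpha> (ab_of_xy x)) 0)"
    using V by (intro sum.cong) (auto simp: Areps_def poly_embw_ab_of_xy)
  also have "\<dots> = poly (lin ?V embw (ab_of_xy x)) 0"
    by (simp add: lin_def poly_sum)
  also have "\<dots> = classical_limit f x"
    by (simp add: classical_limit_def f)
  finally show "iota f x = classical_limit f x" .
qed

lemma rab_of_xy_not_b_headed [simp]: "\<not> b_headed (rab_of_xy x)"
  by (cases x rule: rab_of_xy.cases) simp_all

lemma prep_Lb_rab_of_xy [simp]: "prep Lb F (rab_of_xy x) = 0"
  by (cases x rule: rab_of_xy.cases) simp_all

lemma shHR_Lb_Cons_eq_0: "\<not> b_headed u \<Longrightarrow> \<not> b_headed v \<Longrightarrow> shHR u v (Lb # z) = 0"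
  by (cases "(u, v)" rule: shHR.cases) (auto simp: b_headed_def mono_def)

lemma poly_shHR_rab_of_xy: "poly (shHR (rab_of_xy p) (rab_of_xy q) (rab_of_xy x)) 0 = shCR p q x"
proof (induction p q arbitrary: x rule: shCR.induct)
  case (3 u w v w')
  consider "x = []" | x' where "x = X # x'" | x' where "x = Y # x'"
    by (metis list.exhaust xy.exhaust)
  then show ?case
  proof cases
    case 1
    then show ?thesis by (cases u; cases v) auto
  next
    case 2
    with "3.IH" show ?thesis by (cases u; cases v) (auto simp: shHR_Lb_left shHR_Lb_Cons_eq_0)
  next
    case 3
    with "3.IH" show ?thesis by (cases u; cases v) (auto simp: shHR_Lb_left shHR_Lb_Cons_eq_0)
  qed
qed (auto simp: mono_def)

lemma poly_shHw_ab_of_xy: "poly (shHw (ab_of_xy p) (ab_of_xy q) (ab_of_xy x)) 0 = shCw p q x"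
  by (simp add: shHw_def shCw_def rev_ab_of_xy poly_shHR_rab_of_xy)

lemma CA_like_classical_support:
  assumes f: "CA_like f" and nz: "poly (f u) 0 \<noteq> 0"
  shows "u \<in> range ab_of_xy"
proof -
  from nz have "f u \<noteq> 0" by auto
  with f have start: "u = [] \<or> hd u = Lb" and dvd: "hbar ^ lone_bs u dvd f u"
    by (auto simp: CA_like_def)
  have "lone_bs u = 0"
  proof (rule ccontr)
    assume "lone_bs u \<noteq> 0"
    with dvd have "hbar dvd f u" by (meson dvd_power dvd_trans neq0_conv)
    with nz show False by (auto simp: hbar_def elim!: dvdE)
  qed
  moreover have u: "ab_word (parse u) = u" using ab_word_parse[OF start] .
  ultimately have "HB \<notin> set (parse u)"
    using lone_bs_ab_word[OF admA_parse, of u] by (simp add: hb_count_eq_0_iff)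
  then obtain ks where "parse u = map G ks" "\<forall>k\<in>set ks. 1 \<le> k"
    using HB_free_admA_imp_map_G admA_parse by blast
  with u have "u = ab_of_xy (zw ks)" by (simp add: ab_of_xy_zw)
  then show ?thesis by blast
qed

lemma sum_CA_like_classical:
  assumes "CA_like f"
  shows "(\<Sum>u | f u \<noteq> 0. poly (f u) 0 * T u) =
    (\<Sum>p | classical_limit f p \<noteq> 0. classical_limit f p * T (ab_of_xy p))"
  unfolding classical_limit_def
  using assms CA_like_classical_support
  by (intro sum_nonzero_reindex inj_ab_of_xy) (auto simp: CA_like_def fsupp_def)

lemma classical_limit_shH:
  assumes f: "CA_like f" and g: "CA_like g"
  shows "classical_limit (shH f g) = shC (classical_limit f) (classical_limit g)"
proof
  fix x
  let ?F = "classical_limit f" and ?G = "classical_limit g" and ?x = "ab_of_xy x"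
  have "classical_limit (shH f g) x = (\<Sum>u | f u \<noteq> 0. poly (f u) 0 *
      (\<Sum>v | g v \<noteq> 0. poly (g v) 0 * poly (shHw u v ?x) 0))"
    by (simp add: classical_limit_def shH_def bilin_def lin_def poly_sum)
  also have "\<dots> = (\<Sum>u | f u \<noteq> 0. poly (f u) 0 *
      (\<Sum>q | ?G q \<noteq> 0. ?G q * poly (shHw u (ab_of_xy q) ?x) 0))"
    by (simp add: sum_CA_like_classical[OF g])
  also have "\<dots> = (\<Sum>p | ?F p \<noteq> 0. ?F p *
      (\<Sum>q | ?G q \<noteq> 0. ?G q * poly (shHw (ab_of_xy p) (ab_of_xy q) ?x) 0))"
    by (rule sum_CA_like_classical[OF f])
  also have "\<dots> = shC ?F ?G x"
    by (simp add: shC_def bilin_def lin_def poly_shHw_ab_of_xy)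
  finally show "classical_limit (shH f g) x = shC ?F ?G x" .
qed

lemma iota_shH: "f \<in> CA \<Longrightarrow> g \<in> CA \<Longrightarrow> iota (shH f g) = shC (iota f) (iota g)"
  by (simp add: iota_eq_classical_limit shH_CA classical_limit_shH CA_imp_CA_like)


section \<open>The harmonic product\<close>

abbreviation zbasis :: "nat list \<Rightarrow> hcl" where
  "zbasis \<equiv> \<lambda>ks. mono 1 (zw ks)"

definition classical_coords :: "(Alet list \<Rightarrow> rat poly) \<Rightarrow> nat list \<Rightarrow> rat" where
  "classical_coords V ks = poly (V (map G ks)) 0"

lemma inj_map_G: "inj (map G)"
  by (simp add: inj_def)

lemma classical_coords_Zreps:
  assumes "V \<in> Areps"
  shows "classical_coords V \<in> Zreps"
proof -
  have "fsupp V" using assms by (simp add: Areps_def)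
  then have "fsupp (\<lambda>ks. V (map G ks))" using inj_map_G by (rule fsupp_comp_inj)
  then have "fsupp (classical_coords V)"
    unfolding classical_coords_def by (rule fsupp_subset) auto
  moreover have "\<forall>k\<in>set ks. 1 \<le> k" if "classical_coords V ks \<noteq> 0" for ks
  proof -
    have "V (map G ks) \<noteq> 0" using that by (auto simp: classical_coords_def)
    with assms have "admA (map G ks)" unfolding Areps_def by blast
    then show ?thesis by (simp only: admA_map_G)
  qed
  ultimately show ?thesis by (simp add: Zreps_def)
qed

lemma sum_HB_free_reindex:
  assumes V: "V \<in> Areps" and S: "finite S" "{\<alpha>. poly (V \<alpha>) 0 \<noteq> 0} \<subseteq> S"
    and T: "\<And>\<alpha>. HB \<in> set \<alpha> \<Longrightarrow> T \<alpha> = 0"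
  shows "(\<Sum>\<alpha>\<in>S. poly (V \<alpha>) 0 * T \<alpha>) =
    (\<Sum>ks | classical_coords V ks \<noteq> 0. classical_coords V ks * T (map G ks))"
  unfolding classical_coords_def
proof (rule sum_nonzero_reindex[OF S inj_map_G])
  fix \<alpha> assume "poly (V \<alpha>) 0 \<noteq> 0" "T \<alpha> \<noteq> 0"
  then have "V \<alpha> \<noteq> 0" "HB \<notin> set \<alpha>" using T by auto
  with V have "admA \<alpha>" by (simp add: Areps_def)
  with \<open>HB \<notin> set \<alpha>\<close> obtain ks where "\<alpha> = map G ks"
    using HB_free_admA_imp_map_G by blast
  then show "\<alpha> \<in> range (map G)" by blast
qed

lemma iota_eq_lin_classical_coords:
  assumes "f \<in> CA"
  shows "iota f = lin (classical_coords (Arep f)) zbasis"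
proof
  fix x
  let ?V = "Arep f"
  have V: "?V \<in> Areps" using Arep_CA[OF assms] by blast
  have "{\<alpha>. poly (?V \<alpha>) 0 \<noteq> 0} \<subseteq> {\<alpha>. ?V \<alpha> \<noteq> 0}" by auto
  with V have "finite {\<alpha>. poly (?V \<alpha>) 0 \<noteq> 0}"
    unfolding Areps_def fsupp_def by (blast intro: finite_subset)
  then have "(\<Sum>\<alpha> | poly (?V \<alpha>) 0 \<noteq> 0. poly (?V \<alpha>) 0 * iwA \<alpha> x) =
      (\<Sum>ks | classical_coords ?V ks \<noteq> 0. classical_coords ?V ks * iwA (map G ks) x)"
    by (intro sum_HB_free_reindex[OF V]) (auto simp: iwA_def)
  then show "iota f x = lin (classical_coords ?V) zbasis x"
    by (simp add: iota_def lin_def iwA_map_G)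
qed

lemma zw_inj: "\<forall>k\<in>set ks. 1 \<le> k \<Longrightarrow> \<forall>k\<in>set ls. 1 \<le> k \<Longrightarrow> zw ks = zw ls \<Longrightarrow> ks = ls"
  using ab_word_inj[of "map G ks" "map G ls"] inj_map_G by (simp add: ab_of_xy_zw[symmetric] inj_eq)

lemma Zrep_lin: "K \<in> Zreps \<Longrightarrow> Zrep (lin K zbasis) = K"
  unfolding Zrep_def
proof (rule the_equality)
  fix L assume K: "K \<in> Zreps" and L: "L \<in> Zreps \<and> lin L zbasis = lin K zbasis"
  show "L = K"
  proof (rule lin_coordinates_unique[where P = "\<lambda>ks. \<forall>k\<in>set ks. 1 \<le> k" and e = zw])
    show "zbasis ls (zw ks) = (if ls = ks then 1 else 0)"
      if "\<forall>k\<in>set ks. 1 \<le> k" "\<forall>k\<in>set ls. 1 \<le> k" for ks ls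
      using that zw_inj by (auto simp: mono_def)
  qed (use K L in \<open>auto simp: Zreps_def\<close>)
qed simp

lemma Zrep_iota: "f \<in> CA \<Longrightarrow> Zrep (iota f) = classical_coords (Arep f)"
  by (simp add: iota_eq_lin_classical_coords Zrep_lin classical_coords_Zreps Arep_CA)

lemma fsupp_harmR: "fsupp (harmR u v)"
  by (induction u v rule: harmR.induct)
     (auto intro!: fsupp_prep fsupp_add fsupp_mult_left fsupp_mono)

lemma fsupp_harmA: "fsupp (harmA \<alpha> \<beta>)"
  unfolding harmA_def by (rule fsupp_comp_inj[OF fsupp_harmR]) (simp add: inj_on_def)

lemma circA_admissible:
  "(\<forall>k. u = G k \<longrightarrow> 1 \<le> k) \<Longrightarrow> (\<forall>k. v = G k \<longrightarrow> 1 \<le> k) \<Longrightarrow>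
    (\<forall>k. snd (circA u v) = G k \<longrightarrow> 1 \<le> k)"
  by (cases u; cases v) auto

lemma harmR_admA: "admA u \<Longrightarrow> admA v \<Longrightarrow> harmR u v t \<noteq> 0 \<Longrightarrow> admA t"
proof (induction u v arbitrary: t rule: harmR.induct)
  case (3 u w v w')
  from "3.prems"(3) consider
      "prep u (harmR w (v # w')) t \<noteq> 0"
    | "prep v (harmR (u # w) w') t \<noteq> 0"
    | "prep (snd (circA u v)) (harmR w w') t \<noteq> 0"
    by fastforce
  then show ?case
  proof cases
    case 1
    with "3.IH"(1) "3.prems" show ?thesis by (auto dest!: prep_nonzero_imp)
  next
    case 2
    with "3.IH"(2) "3.prems" show ?thesis by (auto dest!: prep_nonzero_imp)
  next
    case 3
    with "3.IH"(3) "3.prems" circA_admissible[of u v] show ?thesis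
      by (auto dest!: prep_nonzero_imp)
  qed
qed (auto simp: mono_def split: if_splits)

lemma bilin_harmA_Areps:
  assumes V: "V \<in> Areps" and W: "W \<in> Areps"
  shows "bilin V W harmA \<in> Areps"
proof -
  have "fsupp (bilin V W harmA)"
    using V W by (intro fsupp_bilin fsupp_harmA) (simp_all add: Areps_def)
  moreover have "admA \<gamma>" if nz: "bilin V W harmA \<gamma> \<noteq> 0" for \<gamma>
  proof -
    obtain \<alpha> \<beta> where "V \<alpha> \<noteq> 0" "W \<beta> \<noteq> 0" "harmR (rev \<alpha>) (rev \<beta>) (rev \<gamma>) \<noteq> 0"
      using bilin_nonzero_imp[OF nz] by (auto simp: harmA_def)
    moreover from V W this(1,2) have "admA (rev \<alpha>)" "admA (rev \<beta>)"
      by (auto simp: Areps_def admA_def)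
    ultimately have "admA (rev \<gamma>)" using harmR_admA by blast
    then show ?thesis by (simp add: admA_def)
  qed
  ultimately show ?thesis by (simp add: Areps_def)
qed

text \<open>A letter \<open>\<hbar>b\<close> of a factor either survives in the product or is absorbed by
  \<open>\<circ>\<^sub>\<hbar>\<close>, which then contributes the factor \<open>\<hbar>\<close>.\<close>
lemma poly_harmR_HB:
  "HB \<in> set u \<or> HB \<in> set v \<Longrightarrow> HB \<notin> set t \<Longrightarrow> poly (harmR u v t) 0 = 0"
proof (induction u v arbitrary: t rule: harmR.induct)
  case (3 u w v w')
  show ?case
  proof (cases t)
    case (Cons m t')
    with "3.prems" have m: "m \<noteq> HB" "HB \<notin> set t'" by auto
    have A: "poly (prep u (harmR w (v # w')) t) 0 = 0"
      using "3.IH"(1)[of t'] "3.prems"(1) m by (auto simp: Cons)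
    have B: "poly (prep v (harmR (u # w) w') t) 0 = 0"
      using "3.IH"(2)[of t'] "3.prems"(1) m by (auto simp: Cons)
    have C: "poly (fst (circA u v) * prep (snd (circA u v)) (harmR w w') t) 0 = 0"
    proof (cases "u = HB \<or> v = HB")
      case True
      then have "fst (circA u v) = hbar" by (cases u; cases v) auto
      then show ?thesis by simp
    next
      case False
      with "3.IH"(3)[of t'] "3.prems"(1) m show ?thesis by (auto simp: Cons)
    qed
    from A B C show ?thesis by simp
  qed simp
qed (auto simp: mono_def)

lemma poly_harmR_map_G: "poly (harmR (map G ks) (map G ls) (map G ms)) 0 = harmZR ks ls ms"
proof (induction ks ls arbitrary: ms rule: harmZR.induct)
  case (3 k w l w')
  show ?case
  proof (cases ms)
    case (Cons m ms')
    have "poly (harmR (map G (k # w)) (map G (l # w')) (map G ms)) 0 =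
        (if m = k then poly (harmR (map G w) (map G (l # w')) (map G ms')) 0 else 0) +
        (if m = l then poly (harmR (map G (k # w)) (map G w') (map G ms')) 0 else 0) +
        (if m = k + l then poly (harmR (map G w) (map G w') (map G ms')) 0 else 0)"
      by (simp add: Cons)
    also have "\<dots> = harmZR (k # w) (l # w') ms"
      by (simp only: "3.IH" harmZR.simps prep_Cons Cons)
    finally show ?thesis .
  qed simp
qed (auto simp: mono_def map_eq_Cons_conv inj_eq[OF inj_map_G])


lemma classical_coords_bilin_harmA:
  assumes V: "V \<in> Areps" and W: "W \<in> Areps"
  shows "classical_coords (bilin V W harmA) =
    bilin (classical_coords V) (classical_coords W) harmZ"
proof
  fix ms
  let ?c = classical_coords and ?\<mu> = "map G ms"
  have HB: "poly (harmA \<alpha> \<beta> ?\<mu>) 0 = 0" if "HB \<in> set \<alpha> \<or> HB \<in> set \<beta>" for \<alpha> \<beta>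
    using poly_harmR_HB[of "rev \<alpha>" "rev \<beta>" "rev ?\<mu>"] that by (auto simp: harmA_def)
  have fin: "finite {\<alpha>. V \<alpha> \<noteq> 0}" "finite {\<beta>. W \<beta> \<noteq> 0}"
    using V W by (simp_all add: Areps_def fsupp_def)
  have "?c (bilin V W harmA) ms = (\<Sum>\<alpha> | V \<alpha> \<noteq> 0. poly (V \<alpha>) 0 *
      (\<Sum>\<beta> | W \<beta> \<noteq> 0. poly (W \<beta>) 0 * poly (harmA \<alpha> \<beta> ?\<mu>) 0))"
    by (simp add: classical_coords_def bilin_def lin_def poly_sum)
  also have "\<dots> = (\<Sum>\<alpha> | V \<alpha> \<noteq> 0. poly (V \<alpha>) 0 *
      (\<Sum>ls | ?c W ls \<noteq> 0. ?c W ls * poly (harmA \<alpha> (map G ls) ?\<mu>) 0))"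
    by (intro sum.cong refl arg_cong2[where f = "(*)"] sum_HB_free_reindex[OF W fin(2)])
      (auto simp: HB)
  also have "\<dots> = (\<Sum>ks | ?c V ks \<noteq> 0. ?c V ks *
      (\<Sum>ls | ?c W ls \<noteq> 0. ?c W ls * poly (harmA (map G ks) (map G ls) ?\<mu>) 0))"
    using HB by (intro sum_HB_free_reindex[OF V fin(1)]) auto
  also have "\<dots> = bilin (?c V) (?c W) harmZ ms"
    by (simp add: bilin_def lin_def harmA_def harmZ_def rev_map poly_harmR_map_G)
  finally show "?c (bilin V W harmA) ms = bilin (?c V) (?c W) harmZ ms" .
qed

lemma iota_harmH:
  assumes f: "f \<in> CA" and g: "g \<in> CA"
  shows "iota (harmH f g) = harmC (iota f) (iota g)"
proof -
  let ?V = "Arep f" and ?W = "Arep g"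
  have V: "?V \<in> Areps" and W: "?W \<in> Areps" using Arep_CA f g by blast+
  then have H: "bilin ?V ?W harmA \<in> Areps" by (rule bilin_harmA_Areps)
  then have "harmH f g \<in> CA" and "Arep (harmH f g) = bilin ?V ?W harmA"
    by (auto simp: harmH_def CA_def Arep_lin)
  then have "iota (harmH f g) = lin (classical_coords (bilin ?V ?W harmA)) zbasis"
    by (simp add: iota_eq_lin_classical_coords)
  also have "\<dots> = lin (bilin (Zrep (iota f)) (Zrep (iota g)) harmZ) zbasis"
    by (simp add: classical_coords_bilin_harmA[OF V W] Zrep_iota f g)
  finally show ?thesis by (simp add: harmC_def)
qed

theorem proposition3p9:
  assumes "w \<in> CA" and "w' \<in> CA"
  shows "iota (harmH w w') = harmC (iota w) (iota w')
       \<and> iota (shH w w') = shC (iota w) (iota w')"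
  using iota_harmH[OF assms] iota_shH[OF assms] by blast

end
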